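(* Let $R$ be a Dedekind domain, $I\subseteq R$ an ideal with $R/I$ finite, and $G\in R^{n\times n}$. Let $U,V\in\mathrm{GL}_n(R/I)$ and $d_1,\ldots,d_n\in R$ with $d_{i+1}R+I\subseteq d_iR+I$ for every $i$ be such that $G\equiv U D V\bmod I$ with $D=\mathrm{diag}(d_1,\ldots,d_n)$. Consider a random symmetric $n\times n$ matrix $X\in R^{n\times n}$ whose upper-triangular entries $\{X_{i,j}:i\leq j\}$ have independent and uniformly distributed reductions in $R/I$. Then $$\mathbb{P}\bigl(G^{T}XG\equiv 0\bmod I\bigr)=\prod_{i=1}^n\prod_{j=i}^n\frac{\#\{k\in R/I:\ kd_id_j\equiv 0\bmod I\}}{\mathcal{N}_R(I)}.$$
   Context: The norm of an ideal $I\subseteq R$ is $\mathcal{N}_R(I)=\#(R/I)$. Such $U,V,d_1,\ldots,d_n$ (a Smith normal form of $G$ over $R/I$) always exist since $R/I$ is a principal ideal ring. *)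

theory Defs
  imports "Jordan_Normal_Form.Determinant"
    "HOL-Computational_Algebra.Polynomial_Factorial"
    "HOL-Probability.Probability_Mass_Function"
begin

definition is_ideal :: "'a::comm_ring_1 set \<Rightarrow> bool" where
  "is_ideal I \<longleftrightarrow> 0 \<in> I \<and> (\<forall>x\<in>I. \<forall>y\<in>I. x + y \<in> I) \<and> (\<forall>r. \<forall>x\<in>I. r * x \<in> I)"

definition ideal_generated :: "'a::comm_ring_1 set \<Rightarrow> 'a set" where
  "ideal_generated F = {y. \<exists>c. y = (\<Sum>x\<in>F. c x * x)}"

definition prime_ideal :: "'a::comm_ring_1 set \<Rightarrow> bool" where
  "prime_ideal P \<longleftrightarrow> is_ideal P \<and> P \<noteq> UNIV \<and> (\<forall>a b. a * b \<in> P \<longrightarrow> a \<in> P \<or> b \<in> P)"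

definition maximal_ideal :: "'a::comm_ring_1 set \<Rightarrow> bool" where
  "maximal_ideal M \<longleftrightarrow> is_ideal M \<and> M \<noteq> UNIV \<and>
     (\<forall>J. is_ideal J \<and> M \<subseteq> J \<longrightarrow> J = M \<or> J = UNIV)"

definition noetherian_ring :: "'a::comm_ring_1 itself \<Rightarrow> bool" where
  "noetherian_ring _ \<longleftrightarrow> (\<forall>I::'a set. is_ideal I \<longrightarrow> (\<exists>F. finite F \<and> I = ideal_generated F))"

definition integrally_closed :: "'a::idom itself \<Rightarrow> bool" where
  "integrally_closed _ \<longleftrightarrow>
     (\<forall>x :: 'a fract. (\<exists>p :: 'a poly. lead_coeff p = 1 \<and> degree p \<ge> 1 \<and>
                         poly (map_poly to_fract p) x = 0) \<longrightarrow> x \<in> range to_fract)"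

definition dedekind_domain :: "'a::idom itself \<Rightarrow> bool" where
  "dedekind_domain T \<longleftrightarrow> noetherian_ring T \<and> integrally_closed T \<and>
     (\<forall>P::'a set. prime_ideal P \<and> P \<noteq> {0} \<longrightarrow> maximal_ideal P)"

definition coset_of :: "'a::comm_ring_1 set \<Rightarrow> 'a \<Rightarrow> 'a set" where
  "coset_of I x = {y. x - y \<in> I}"

definition quotient_set :: "'a::comm_ring_1 set \<Rightarrow> 'a set set" where
  "quotient_set I = range (coset_of I)"

definition ideal_norm :: "'a::comm_ring_1 set \<Rightarrow> nat" where
  "ideal_norm I = card (quotient_set I)"

definition principal_plus :: "'a::comm_ring_1 \<Rightarrow> 'a set \<Rightarrow> 'a set" where
  "principal_plus d I = {d * r + x | r x. x \<in> I}"

definition residue_system :: "'a::comm_ring_1 set \<Rightarrow> 'a set \<Rightarrow> bool" where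
  "residue_system I S \<longleftrightarrow> (\<forall>x. \<exists>!s. s \<in> S \<and> x - s \<in> I)"

definition mat_cong :: "'a::comm_ring_1 set \<Rightarrow> 'a mat \<Rightarrow> 'a mat \<Rightarrow> bool" where
  "mat_cong I A B \<longleftrightarrow> dim_row A = dim_row B \<and> dim_col A = dim_col B \<and>
     (\<forall>i<dim_row A. \<forall>j<dim_col A. A $$ (i,j) - B $$ (i,j) \<in> I)"

definition GL_mod :: "nat \<Rightarrow> 'a::comm_ring_1 set \<Rightarrow> 'a mat set" where
  "GL_mod n I = {U \<in> carrier_mat n n. \<exists>W \<in> carrier_mat n n.
      mat_cong I (U * W) (1\<^sub>m n) \<and> mat_cong I (W * U) (1\<^sub>m n)}"

definition diag_of :: "nat \<Rightarrow> (nat \<Rightarrow> 'a::zero) \<Rightarrow> 'a mat" where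
  "diag_of n d = Matrix.mat n n (\<lambda>(i,j). if i = j then d i else 0)"

definition upper_idx :: "nat \<Rightarrow> (nat \<times> nat) set" where
  "upper_idx n = {(i,j). i \<le> j \<and> j < n}"

definition sym_mat_of :: "nat \<Rightarrow> (nat \<times> nat \<Rightarrow> 'a) \<Rightarrow> 'a mat" where
  "sym_mat_of n f = Matrix.mat n n (\<lambda>(i,j). if i \<le> j then f (i,j) else f (j,i))"

end

theory Submission
  imports Defs
begin

text \<open>Write \<open>X\<close> for the symmetric matrix with upper entries \<open>f\<close>. Since \<open>G \<equiv> U D V\<close> and \<open>V\<close> is
  invertible modulo \<open>I\<close>, the matrix \<open>G\<^sup>T X G\<close> vanishes modulo \<open>I\<close> exactly when \<open>D (U\<^sup>T X U) D\<close> does,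
  i.e. when \<open>d\<^sub>i Y\<^sub>i\<^sub>j d\<^sub>j \<in> I\<close> for \<open>i \<le> j\<close>, where \<open>Y = U\<^sup>T X U\<close>. Because \<open>U\<close> is invertible modulo \<open>I\<close>,
  \<open>X \<mapsto> U\<^sup>T X U\<close> permutes the symmetric matrices over \<open>R/I\<close>, so the upper entries of \<open>Y\<close> are again
  independent and uniform modulo \<open>I\<close>, and the probability factors over the entries.\<close>

lemma ideal_zero: "is_ideal I \<Longrightarrow> 0 \<in> I"
  unfolding is_ideal_def by blast

lemma ideal_add: "is_ideal I \<Longrightarrow> x \<in> I \<Longrightarrow> y \<in> I \<Longrightarrow> x + y \<in> I"
  unfolding is_ideal_def by blast

lemma ideal_mult_left: "is_ideal I \<Longrightarrow> x \<in> I \<Longrightarrow> r * x \<in> I"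
  unfolding is_ideal_def by blast

lemma ideal_mult_right: "is_ideal I \<Longrightarrow> x \<in> I \<Longrightarrow> x * r \<in> I"
  using ideal_mult_left[of I x r] by (simp add: mult.commute)

lemma ideal_uminus: "is_ideal I \<Longrightarrow> x \<in> I \<Longrightarrow> - x \<in> I"
  using ideal_mult_left[of I x "- 1"] by simp

lemma ideal_sum: "is_ideal I \<Longrightarrow> (\<And>x. x \<in> A \<Longrightarrow> f x \<in> I) \<Longrightarrow> sum f A \<in> I"
  by (induction A rule: infinite_finite_induct) (auto simp: ideal_zero ideal_add)

lemma ideal_cong_sym: "is_ideal I \<Longrightarrow> x - y \<in> I \<Longrightarrow> y - x \<in> I"
  using ideal_uminus[of I "x - y"] by simp

lemma ideal_cong_trans: "is_ideal I \<Longrightarrow> x - y \<in> I \<Longrightarrow> y - z \<in> I \<Longrightarrow> x - z \<in> I"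
  using ideal_add[of I "x - y" "y - z"] by simp

lemma ideal_cong_mem: "is_ideal I \<Longrightarrow> x - y \<in> I \<Longrightarrow> x \<in> I \<longleftrightarrow> y \<in> I"
  using ideal_add[of I "x - y" y] ideal_add[of I "y - x" x] ideal_cong_sym[of I x y] by auto

lemma ideal_cong_mult_mem: "is_ideal I \<Longrightarrow> x - y \<in> I \<Longrightarrow> x * c \<in> I \<longleftrightarrow> y * c \<in> I"
  using ideal_cong_mem[of I "x * c" "y * c"] ideal_mult_right[of I "x - y" c]
  by (simp add: left_diff_distrib)

lemma mat_cong_refl: "is_ideal I \<Longrightarrow> mat_cong I A A"
  by (simp add: mat_cong_def ideal_zero)

lemma mat_cong_sym: "is_ideal I \<Longrightarrow> mat_cong I A B \<Longrightarrow> mat_cong I B A"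
  by (auto simp: mat_cong_def intro: ideal_cong_sym)

lemma mat_cong_trans: "is_ideal I \<Longrightarrow> mat_cong I A B \<Longrightarrow> mat_cong I B C \<Longrightarrow> mat_cong I A C"
  unfolding mat_cong_def by (metis ideal_cong_trans)

lemma mat_cong_transpose: "mat_cong I A B \<Longrightarrow> mat_cong I A\<^sup>T B\<^sup>T"
  by (auto simp: mat_cong_def)

lemma mat_cong_zero_iff:
  "M \<in> carrier_mat n n \<Longrightarrow> mat_cong I M (0\<^sub>m n n) \<longleftrightarrow> (\<forall>i<n. \<forall>j<n. M $$ (i,j) \<in> I)"
  by (auto simp: mat_cong_def)

lemma mat_cong_mult:
  assumes I: "is_ideal I" and A: "mat_cong I A A'" and B: "mat_cong I B B'"
    and dim: "dim_col A = dim_row B"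
  shows "mat_cong I (A * B) (A' * B')"
  unfolding mat_cong_def
proof (intro conjI allI impI)
  fix i j assume i: "i < dim_row (A * B)" and j: "j < dim_col (A * B)"
  have "(A * B) $$ (i,j) - (A' * B') $$ (i,j) =
      (\<Sum>l<dim_row B. (A $$ (i,l) - A' $$ (i,l)) * B $$ (l,j) + A' $$ (i,l) * (B $$ (l,j) - B' $$ (l,j)))"
    using i j A B dim
    by (simp add: mat_cong_def scalar_prod_def atLeast0LessThan sum_subtractf[symmetric] algebra_simps)
  also have "\<dots> \<in> I"
    using i j A B dim unfolding mat_cong_def
    by (intro ideal_sum[OF I] ideal_add[OF I] ideal_mult_left[OF I] ideal_mult_right[OF I]) auto
  finally show "(A * B) $$ (i,j) - (A' * B') $$ (i,j) \<in> I" .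
qed (use A B in \<open>auto simp: mat_cong_def\<close>)

lemma mat_cong_congruence:
  assumes "is_ideal I" "mat_cong I M M'" "M \<in> carrier_mat n n" "P \<in> carrier_mat n n"
  shows "mat_cong I (P\<^sup>T * M * P) (P\<^sup>T * M' * P)"
  using assms by (intro mat_cong_mult mat_cong_refl) auto

lemma transpose_congruence:
  fixes M :: "'a::comm_ring_1 mat"
  assumes "M \<in> carrier_mat n n" "P \<in> carrier_mat n n"
  shows "(P\<^sup>T * M * P)\<^sup>T = P\<^sup>T * M\<^sup>T * P"
  using assms by (simp add: transpose_mult[of _ n n _ n] assoc_mult_mat[of _ n n _ n _ n])

lemma congruence_compose:
  fixes M :: "'a::comm_ring_1 mat"
  assumes "M \<in> carrier_mat n n" "P \<in> carrier_mat n n" "Q \<in> carrier_mat n n"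
  shows "Q\<^sup>T * (P\<^sup>T * M * P) * Q = (P * Q)\<^sup>T * M * (P * Q)"
  using assms by (simp add: transpose_mult[of _ n n _ n] assoc_mult_mat[of _ n n _ n _ n])

lemma GL_mod_congruence_cancel:
  assumes I: "is_ideal I" and P: "P \<in> GL_mod n I"
    and M: "M \<in> carrier_mat n n" and M': "M' \<in> carrier_mat n n"
  shows "mat_cong I (P\<^sup>T * M * P) (P\<^sup>T * M' * P) \<longleftrightarrow> mat_cong I M M'"
proof
  obtain W where Pn: "P \<in> carrier_mat n n" and W: "W \<in> carrier_mat n n"
    and PW: "mat_cong I (P * W) (1\<^sub>m n)"
    using P unfolding GL_mod_def by blast
  \<comment> \<open>A right inverse of \<open>P\<close> modulo \<open>I\<close> undoes the congruence: \<open>W\<^sup>T (P\<^sup>T N P) W = (P W)\<^sup>T N (P W) \<equiv> N\<close>.\<close>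
  have undo: "mat_cong I (W\<^sup>T * (P\<^sup>T * N * P) * W) N" if N: "N \<in> carrier_mat n n" for N
  proof -
    have "mat_cong I ((P * W)\<^sup>T * N * (P * W)) ((1\<^sub>m n)\<^sup>T * N * 1\<^sub>m n)"
      using Pn W N by (intro mat_cong_mult[OF I] mat_cong_transpose PW mat_cong_refl[OF I]) auto
    moreover have "(1\<^sub>m n)\<^sup>T * N * 1\<^sub>m n = N"
      using N by simp
    ultimately show ?thesis
      by (simp only: congruence_compose[OF N Pn W])
  qed
  assume "mat_cong I (P\<^sup>T * M * P) (P\<^sup>T * M' * P)"
  then have "mat_cong I (W\<^sup>T * (P\<^sup>T * M * P) * W) (W\<^sup>T * (P\<^sup>T * M' * P) * W)"
    by (rule mat_cong_congruence[OF I _ _ W]) (use Pn M in simp)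
  then show "mat_cong I M M'"
    using undo[OF M] undo[OF M'] mat_cong_trans[OF I] mat_cong_sym[OF I] by meson
next
  show "mat_cong I M M' \<Longrightarrow> mat_cong I (P\<^sup>T * M * P) (P\<^sup>T * M' * P)"
    using P M unfolding GL_mod_def by (intro mat_cong_congruence[OF I]) auto
qed

lemma diag_of_carrier [simp]: "diag_of n d \<in> carrier_mat n n"
  by (simp add: diag_of_def)

lemma transpose_diag_of [simp]: "(diag_of n d)\<^sup>T = diag_of n d"
  by (auto simp: diag_of_def intro!: eq_matI)

lemma index_diag_congruence:
  fixes Y :: "'a::comm_ring_1 mat"
  assumes Y: "Y \<in> carrier_mat n n" and ij: "i < n" "j < n"
  shows "(diag_of n d * Y * diag_of n d) $$ (i,j) = d i * Y $$ (i,j) * d j"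
proof -
  have row: "(diag_of n d * Y) $$ (i,l) = d i * Y $$ (i,l)" if "l < n" for l
    using Y ij that
    by (simp add: diag_of_def scalar_prod_def sum.delta if_distrib if_distribR cong: if_cong)
  show ?thesis
    using Y ij row
    by (simp add: diag_of_def scalar_prod_def sum.delta' if_distrib if_distribR cong: if_cong)
qed

lemma smith_form_congruence_zero_iff:
  fixes G :: "'a::comm_ring_1 mat"
  assumes I: "is_ideal I" and X: "X \<in> carrier_mat n n" and G: "G \<in> carrier_mat n n"
    and U: "U \<in> carrier_mat n n" and V: "V \<in> GL_mod n I"
    and smith: "mat_cong I G (U * diag_of n d * V)"
  shows "mat_cong I (G\<^sup>T * X * G) (0\<^sub>m n n) \<longleftrightarrow>
         mat_cong I (diag_of n d * (U\<^sup>T * X * U) * diag_of n d) (0\<^sub>m n n)"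
proof -
  let ?D = "diag_of n d" and ?Y = "U\<^sup>T * X * U"
  have Vn: "V \<in> carrier_mat n n"
    using V unfolding GL_mod_def by auto
  have DYD: "?D * ?Y * ?D \<in> carrier_mat n n"
    using X U by (intro mult_carrier_mat[of _ n n] diag_of_carrier) auto
  have "mat_cong I (G\<^sup>T * X * G) ((U * ?D * V)\<^sup>T * X * (U * ?D * V))"
    using smith G X by (intro mat_cong_mult[OF I] mat_cong_transpose mat_cong_refl[OF I]) auto
  also have "(U * ?D * V)\<^sup>T * X * (U * ?D * V) = V\<^sup>T * ((U * ?D)\<^sup>T * X * (U * ?D)) * V"
    using X U Vn by (intro congruence_compose[symmetric]) auto
  also have "\<dots> = V\<^sup>T * (?D * ?Y * ?D) * V"
    using congruence_compose[OF X U diag_of_carrier, of d] by simp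
  finally have G_DYD: "mat_cong I (G\<^sup>T * X * G) (V\<^sup>T * (?D * ?Y * ?D) * V)" .
  have "V\<^sup>T * 0\<^sub>m n n * V = 0\<^sub>m n n"
    using Vn by simp
  then have "mat_cong I (G\<^sup>T * X * G) (0\<^sub>m n n) \<longleftrightarrow>
             mat_cong I (V\<^sup>T * (?D * ?Y * ?D) * V) (V\<^sup>T * 0\<^sub>m n n * V)"
    using mat_cong_trans[OF I G_DYD] mat_cong_trans[OF I mat_cong_sym[OF I G_DYD]] by metis
  also have "\<dots> \<longleftrightarrow> mat_cong I (?D * ?Y * ?D) (0\<^sub>m n n)"
    using GL_mod_congruence_cancel[OF I V DYD] by simp
  finally show ?thesis .
qed

lemma sym_mat_of_carrier [simp]: "sym_mat_of n f \<in> carrier_mat n n"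
  by (simp add: sym_mat_of_def)

lemma transpose_sym_mat_of [simp]: "(sym_mat_of n f)\<^sup>T = sym_mat_of n f"
  by (auto simp: sym_mat_of_def intro!: eq_matI)

lemma upper_idx_Sigma: "upper_idx n = (SIGMA i:{..<n}. {i..<n})"
  by (auto simp: upper_idx_def)

lemma upper_idx_finite [simp]: "finite (upper_idx n)"
  by (simp add: upper_idx_Sigma)

lemma mat_cong_symmetric_iff_upper:
  assumes "M \<in> carrier_mat n n" "M' \<in> carrier_mat n n" "M\<^sup>T = M" "M'\<^sup>T = M'"
  shows "mat_cong I M M' \<longleftrightarrow> (\<forall>(i,j)\<in>upper_idx n. M $$ (i,j) - M' $$ (i,j) \<in> I)"
proof
  assume upper: "\<forall>(i,j)\<in>upper_idx n. M $$ (i,j) - M' $$ (i,j) \<in> I"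
  have "M $$ (i,j) - M' $$ (i,j) \<in> I" if "i < n" "j < n" for i j
  proof (cases "i \<le> j")
    case True
    then show ?thesis using upper that by (auto simp: upper_idx_def)
  next
    case False
    then have "M $$ (j,i) - M' $$ (j,i) \<in> I" using upper that by (auto simp: upper_idx_def)
    moreover have "M $$ (j,i) = M $$ (i,j)" "M' $$ (j,i) = M' $$ (i,j)"
      using assms that by (metis carrier_matD index_transpose_mat(1))+
    ultimately show ?thesis by simp
  qed
  then show "mat_cong I M M'"
    using assms by (simp add: mat_cong_def)
qed (use assms in \<open>auto simp: mat_cong_def upper_idx_def\<close>)

definition residue_rep :: "'a::comm_ring_1 set \<Rightarrow> 'a set \<Rightarrow> 'a \<Rightarrow> 'a" where
  "residue_rep I S x = (THE s. s \<in> S \<and> x - s \<in> I)"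

definition upper_residues ::
    "'a::comm_ring_1 set \<Rightarrow> 'a set \<Rightarrow> nat \<Rightarrow> 'a mat \<Rightarrow> nat \<times> nat \<Rightarrow> 'a" where
  "upper_residues I S n M = (\<lambda>p\<in>upper_idx n. residue_rep I S (M $$ p))"

lemma residue_rep:
  assumes "residue_system I S"
  shows "residue_rep I S x \<in> S" "x - residue_rep I S x \<in> I"
  using theI'[of "\<lambda>s. s \<in> S \<and> x - s \<in> I"] assms
  unfolding residue_rep_def residue_system_def by auto

lemma residue_system_unique:
  "is_ideal I \<Longrightarrow> residue_system I S \<Longrightarrow> s \<in> S \<Longrightarrow> t \<in> S \<Longrightarrow> s - t \<in> I \<Longrightarrow> s = t"
  unfolding residue_system_def by (metis diff_self ideal_zero)

lemma residue_rep_eq_iff: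
  assumes I: "is_ideal I" and S: "residue_system I S"
  shows "residue_rep I S x = residue_rep I S y \<longleftrightarrow> x - y \<in> I"
proof
  assume "residue_rep I S x = residue_rep I S y"
  then show "x - y \<in> I"
    using residue_rep(2)[OF S, of x] residue_rep(2)[OF S, of y] ideal_cong_sym[OF I]
      ideal_cong_trans[OF I] by metis
next
  assume "x - y \<in> I"
  then have "residue_rep I S x - residue_rep I S y \<in> I"
    using residue_rep(2)[OF S, of x] residue_rep(2)[OF S, of y] ideal_cong_sym[OF I]
      ideal_cong_trans[OF I] by metis
  then show "residue_rep I S x = residue_rep I S y"
    using residue_system_unique[OF I S] residue_rep(1)[OF S] by blast
qed

lemma residue_rep_of_residue:
  "is_ideal I \<Longrightarrow> residue_system I S \<Longrightarrow> s \<in> S \<Longrightarrow> residue_rep I S s = s"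
  using residue_system_unique residue_rep by (metis ideal_cong_sym)

lemma upper_residues_PiE: "residue_system I S \<Longrightarrow> upper_residues I S n M \<in> upper_idx n \<rightarrow>\<^sub>E S"
  by (simp add: upper_residues_def residue_rep)

lemma upper_residues_sym_mat_of:
  assumes "is_ideal I" "residue_system I S" "f \<in> upper_idx n \<rightarrow>\<^sub>E S"
  shows "upper_residues I S n (sym_mat_of n f) = f"
proof (rule PiE_ext[OF upper_residues_PiE[OF assms(2)] assms(3)])
  fix p assume p: "p \<in> upper_idx n"
  then have "sym_mat_of n f $$ p = f p"
    by (auto simp: upper_idx_def sym_mat_of_def)
  then show "upper_residues I S n (sym_mat_of n f) p = f p"
    using p residue_rep_of_residue[OF assms(1,2) PiE_mem[OF assms(3) p]]
    by (simp add: upper_residues_def)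
qed

lemma upper_residues_eq_iff:
  assumes "is_ideal I" "residue_system I S"
    and "M \<in> carrier_mat n n" "M' \<in> carrier_mat n n" "M\<^sup>T = M" "M'\<^sup>T = M'"
  shows "upper_residues I S n M = upper_residues I S n M' \<longleftrightarrow> mat_cong I M M'"
proof -
  have "upper_residues I S n M = upper_residues I S n M' \<longleftrightarrow>
        (\<forall>p\<in>upper_idx n. M $$ p - M' $$ p \<in> I)"
    unfolding upper_residues_def residue_rep_eq_iff[OF assms(1,2), symmetric]
  proof (intro iffI ballI restrict_ext)
    fix p assume "restrict (\<lambda>p. residue_rep I S (M $$ p)) (upper_idx n) =
                  restrict (\<lambda>p. residue_rep I S (M' $$ p)) (upper_idx n)" and "p \<in> upper_idx n"
    then show "residue_rep I S (M $$ p) = residue_rep I S (M' $$ p)"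
      by (metis restrict_apply')
  qed auto
  then show ?thesis
    using mat_cong_symmetric_iff_upper[OF assms(3-)] by auto
qed

lemma upper_residues_congruence_bij:
  assumes I: "is_ideal I" and S: "residue_system I S" "finite S" and P: "P \<in> GL_mod n I"
  shows "bij_betw (\<lambda>f. upper_residues I S n (P\<^sup>T * sym_mat_of n f * P))
           (upper_idx n \<rightarrow>\<^sub>E S) (upper_idx n \<rightarrow>\<^sub>E S)"
proof -
  let ?\<Omega> = "upper_idx n \<rightarrow>\<^sub>E S" and ?X = "sym_mat_of n"
  have Pn: "P \<in> carrier_mat n n"
    using P by (simp add: GL_mod_def)
  have PXP: "P\<^sup>T * ?X f * P \<in> carrier_mat n n" "(P\<^sup>T * ?X f * P)\<^sup>T = P\<^sup>T * ?X f * P" for f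
    using Pn transpose_congruence[OF sym_mat_of_carrier Pn] by auto
  have "inj_on (\<lambda>f. upper_residues I S n (P\<^sup>T * ?X f * P)) ?\<Omega>"
  proof (rule inj_onI)
    fix f g assume f: "f \<in> ?\<Omega>" and g: "g \<in> ?\<Omega>"
      and "upper_residues I S n (P\<^sup>T * ?X f * P) = upper_residues I S n (P\<^sup>T * ?X g * P)"
    then have "mat_cong I (P\<^sup>T * ?X f * P) (P\<^sup>T * ?X g * P)"
      using upper_residues_eq_iff[OF I S(1) PXP(1) PXP(1) PXP(2) PXP(2)] by blast
    then have "mat_cong I (?X f) (?X g)"
      by (rule GL_mod_congruence_cancel[OF I P sym_mat_of_carrier sym_mat_of_carrier, THEN iffD1])
    then have "upper_residues I S n (?X f) = upper_residues I S n (?X g)"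
      by (rule upper_residues_eq_iff[OF I S(1) sym_mat_of_carrier sym_mat_of_carrier
            transpose_sym_mat_of transpose_sym_mat_of, THEN iffD2])
    then show "f = g"
      using upper_residues_sym_mat_of[OF I S(1) f] upper_residues_sym_mat_of[OF I S(1) g] by simp
  qed
  moreover have "(\<lambda>f. upper_residues I S n (P\<^sup>T * ?X f * P)) ` ?\<Omega> \<subseteq> ?\<Omega>"
    using upper_residues_PiE[OF S(1)] by blast
  moreover have "finite ?\<Omega>"
    using S(2) by (simp add: finite_PiE)
  ultimately show ?thesis
    unfolding bij_betw_def using endo_inj_surj by blast
qed

lemma quadratic_form_vanishes_iff_upper_residues:
  fixes G :: "'a::comm_ring_1 mat"
  assumes I: "is_ideal I" and S: "residue_system I S" and G: "G \<in> carrier_mat n n"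
    and U: "U \<in> GL_mod n I" and V: "V \<in> GL_mod n I"
    and smith: "mat_cong I G (U * diag_of n d * V)"
  shows "(\<forall>i<n. \<forall>j<n. (G\<^sup>T * sym_mat_of n f * G) $$ (i,j) \<in> I) \<longleftrightarrow>
         upper_residues I S n (U\<^sup>T * sym_mat_of n f * U)
           \<in> PiE (upper_idx n) (\<lambda>(i,j). {s \<in> S. s * d i * d j \<in> I})"
proof -
  let ?X = "sym_mat_of n f" and ?D = "diag_of n d"
  let ?Y = "U\<^sup>T * ?X * U"
  have Un: "U \<in> carrier_mat n n"
    using U by (simp add: GL_mod_def)
  have Y: "?Y \<in> carrier_mat n n" "?Y\<^sup>T = ?Y"
    using Un transpose_congruence[OF sym_mat_of_carrier Un] by auto
  have DYD: "?D * ?Y * ?D \<in> carrier_mat n n" "(?D * ?Y * ?D)\<^sup>T = ?D * ?Y * ?D"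
    using Y transpose_congruence[OF Y(1) diag_of_carrier[of n d]]
    by (auto intro!: mult_carrier_mat[of _ n n])
  have "(\<forall>i<n. \<forall>j<n. (G\<^sup>T * ?X * G) $$ (i,j) \<in> I) \<longleftrightarrow> mat_cong I (G\<^sup>T * ?X * G) (0\<^sub>m n n)"
    using G by (intro mat_cong_zero_iff[symmetric]) auto
  also have "\<dots> \<longleftrightarrow> mat_cong I (?D * ?Y * ?D) (0\<^sub>m n n)"
    by (rule smith_form_congruence_zero_iff[OF I sym_mat_of_carrier G Un V smith])
  also have "\<dots> \<longleftrightarrow> (\<forall>(i,j)\<in>upper_idx n. d i * ?Y $$ (i,j) * d j \<in> I)"
    using mat_cong_symmetric_iff_upper[OF DYD(1) zero_carrier_mat DYD(2)] Y(1)
    by (auto simp: upper_idx_def index_diag_congruence)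
  also have "\<dots> \<longleftrightarrow> (\<forall>(i,j)\<in>upper_idx n. residue_rep I S (?Y $$ (i,j)) * d i * d j \<in> I)"
  proof (intro ball_cong refl, clarify)
    fix i j
    show "d i * ?Y $$ (i,j) * d j \<in> I \<longleftrightarrow> residue_rep I S (?Y $$ (i,j)) * d i * d j \<in> I"
      using ideal_cong_mult_mem[OF I residue_rep(2)[OF S], of "?Y $$ (i,j)" "d i * d j"]
      by (simp add: ac_simps)
  qed
  also have "\<dots> \<longleftrightarrow> upper_residues I S n ?Y \<in> PiE (upper_idx n) (\<lambda>(i,j). {s \<in> S. s * d i * d j \<in> I})"
    using residue_rep(1)[OF S] by (auto simp: upper_residues_def PiE_iff)
  finally show ?thesis .
qed

lemma coset_of_self: "is_ideal I \<Longrightarrow> x \<in> coset_of I x"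
  by (simp add: coset_of_def ideal_zero)

lemma coset_of_eq_iff:
  assumes I: "is_ideal I"
  shows "coset_of I x = coset_of I y \<longleftrightarrow> x - y \<in> I"
proof
  assume "coset_of I x = coset_of I y"
  then have "y \<in> coset_of I x"
    using coset_of_self[OF I, of y] by simp
  then show "x - y \<in> I"
    by (simp add: coset_of_def)
next
  assume "x - y \<in> I"
  then show "coset_of I x = coset_of I y"
    unfolding coset_of_def using ideal_cong_trans[OF I] ideal_cong_sym[OF I] by blast
qed

lemma residue_system_bij_betw_quotient:
  assumes I: "is_ideal I" and S: "residue_system I S"
    and Q: "\<And>x y. x - y \<in> I \<Longrightarrow> Q x \<Longrightarrow> Q y"
  shows "bij_betw (coset_of I) {s \<in> S. Q s} {c \<in> quotient_set I. \<exists>k\<in>c. Q k}"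
proof -
  have "inj_on (coset_of I) {s \<in> S. Q s}"
    using residue_system_unique[OF I S] by (auto intro!: inj_onI simp: coset_of_eq_iff[OF I])
  moreover have "coset_of I ` {s \<in> S. Q s} = {c \<in> quotient_set I. \<exists>k\<in>c. Q k}"
  proof safe
    fix c k assume "c \<in> quotient_set I" "k \<in> c" "Q k"
    then obtain x where x: "c = coset_of I x" "x - k \<in> I"
      by (auto simp: quotient_set_def coset_of_def)
    let ?s = "residue_rep I S x"
    have "k - ?s \<in> I"
      using x(2) residue_rep(2)[OF S] ideal_cong_sym[OF I] ideal_cong_trans[OF I] by blast
    then have "Q ?s"
      using Q \<open>Q k\<close> by blast
    moreover have "c = coset_of I ?s"
      using x(1) residue_rep(2)[OF S] coset_of_eq_iff[OF I] by simp
    ultimately show "c \<in> coset_of I ` {s \<in> S. Q s}"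
      using residue_rep(1)[OF S] by blast
  qed (use coset_of_self[OF I] in \<open>auto simp: quotient_set_def\<close>)
  ultimately show ?thesis
    by (simp add: bij_betw_def)
qed

lemma residue_system_card:
  assumes I: "is_ideal I" and S: "residue_system I S" and fin: "finite (quotient_set I)"
  shows "finite S" "card S = ideal_norm I"
proof -
  have "{c \<in> quotient_set I. \<exists>k\<in>c. True} = quotient_set I"
    using coset_of_self[OF I] by (auto simp: quotient_set_def)
  then have "bij_betw (coset_of I) S (quotient_set I)"
    using residue_system_bij_betw_quotient[OF I S, of "\<lambda>_. True"] by simp
  then show "finite S" "card S = ideal_norm I"
    using fin by (simp_all add: bij_betw_finite bij_betw_same_card ideal_norm_def)
qed

lemma measure_pmf_of_set_bij_vimage:
  assumes "finite A" "A \<noteq> {}" "bij_betw h A A"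
  shows "measure_pmf.prob (pmf_of_set A) (h -` B) = measure_pmf.prob (pmf_of_set A) B"
proof -
  have "map_pmf h (pmf_of_set A) = pmf_of_set A"
    using assms map_pmf_of_set_inj[of h A] by (simp add: bij_betw_def)
  then show ?thesis
    by (metis measure_map_pmf)
qed

lemma measure_pmf_of_set_PiE:
  assumes "finite A" "finite S" "S \<noteq> {}" "\<And>a. a \<in> A \<Longrightarrow> B a \<subseteq> S"
  shows "measure_pmf.prob (pmf_of_set (A \<rightarrow>\<^sub>E S)) (PiE A B) = (\<Prod>a\<in>A. card (B a) / card S)"
proof -
  have "(A \<rightarrow>\<^sub>E S) \<inter> PiE A B = PiE A B"
    using assms(4) by (auto simp: PiE_iff)
  moreover have "A \<rightarrow>\<^sub>E S \<noteq> {}"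
    using assms(3) by (simp add: PiE_eq_empty_iff)
  ultimately show ?thesis
    using assms(1,2) by (simp add: measure_pmf_of_set finite_PiE card_PiE prod_dividef)
qed

theorem lemma2p1:
  fixes I :: "'a::idom set" and G U V :: "'a mat" and d :: "nat \<Rightarrow> 'a"
    and n :: nat and S :: "'a set"
  assumes "dedekind_domain TYPE('a)"
    and "is_ideal I"
    and "finite (quotient_set I)"
    and "G \<in> carrier_mat n n"
    and "U \<in> GL_mod n I" and "V \<in> GL_mod n I"
    and "\<forall>i. i + 1 < n \<longrightarrow> principal_plus (d (i+1)) I \<subseteq> principal_plus (d i) I"
    and "mat_cong I G (U * diag_of n d * V)"
    and "residue_system I S"
  shows "measure_pmf.prob (pmf_of_set (upper_idx n \<rightarrow>\<^sub>E S))
           {f. \<forall>i<n. \<forall>j<n. (transpose_mat G * sym_mat_of n f * G) $$ (i,j) \<in> I}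
         = (\<Prod>i<n. \<Prod>j\<in>{i..<n}.
              real (card {c \<in> quotient_set I. \<exists>k\<in>c. k * d i * d j \<in> I})
              / real (ideal_norm I))"
proof -
  note I = assms(2) and S = assms(9)
  let ?\<Omega> = "upper_idx n \<rightarrow>\<^sub>E S" and ?B = "\<lambda>(i,j). {s \<in> S. s * d i * d j \<in> I}"
  let ?reduce = "\<lambda>f. upper_residues I S n (U\<^sup>T * sym_mat_of n f * U)"
  have S_card: "finite S" "card S = ideal_norm I"
    using residue_system_card[OF I S assms(3)] by auto
  have "S \<noteq> {}"
    using S by (auto simp: residue_system_def)
  then have \<Omega>: "finite ?\<Omega>" "?\<Omega> \<noteq> {}"
    using S_card(1) by (auto simp: finite_PiE PiE_eq_empty_iff)
  have event: "{f. \<forall>i<n. \<forall>j<n. (G\<^sup>T * sym_mat_of n f * G) $$ (i,j) \<in> I}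
                = ?reduce -` PiE (upper_idx n) ?B"
    using quadratic_form_vanishes_iff_upper_residues[OF I S assms(4,5,6,8)] by blast
  have B_card: "card {s \<in> S. s * d i * d j \<in> I}
                 = card {c \<in> quotient_set I. \<exists>k\<in>c. k * d i * d j \<in> I}" for i j
    using residue_system_bij_betw_quotient[OF I S, of "\<lambda>k. k * d i * d j \<in> I"]
      ideal_cong_mult_mem[OF I, of _ _ "d i * d j"]
    by (simp add: mult.assoc bij_betw_same_card)
  have "measure_pmf.prob (pmf_of_set ?\<Omega>) (?reduce -` PiE (upper_idx n) ?B)
        = measure_pmf.prob (pmf_of_set ?\<Omega>) (PiE (upper_idx n) ?B)"
    using upper_residues_congruence_bij[OF I S S_card(1) assms(5)]
    by (rule measure_pmf_of_set_bij_vimage[OF \<Omega>])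
  also have "\<dots> = (\<Prod>p\<in>upper_idx n. card (?B p) / card S)"
    using S_card(1) \<open>S \<noteq> {}\<close> by (intro measure_pmf_of_set_PiE) auto
  also have "\<dots> = (\<Prod>i<n. \<Prod>j\<in>{i..<n}.
              real (card {c \<in> quotient_set I. \<exists>k\<in>c. k * d i * d j \<in> I}) / real (ideal_norm I))"
    by (simp add: upper_idx_Sigma prod.Sigma case_prod_beta B_card S_card(2))
  finally show ?thesis
    unfolding event .
qed

end
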